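(* Let $i,j,k\ge 0$. Each permutation of one of the forms $21\ominus(\delta_j\oplus\delta_k)$, $\delta_i\ominus(1\oplus\delta_k)$, or $\delta_i\ominus(\delta_j\oplus 1)$ is shallow.
   Context: For $\pi\in S_n$: $D(\pi)=\sum_{i}|\pi_i-i|$, $I(\pi)$ is the number of inversions, $T(\pi)=n-\mathrm{cyc}(\pi)$ with $\mathrm{cyc}$ the number of cycles in the disjoint cycle decomposition; $\pi$ is shallow if $I(\pi)+T(\pi)=D(\pi)$. $\delta_m=m(m-1)\cdots21\in S_m$ is the decreasing permutation ($\delta_0$ is the empty permutation), and $1$ denotes the permutation of length one. For $\alpha\in S_a$, $\beta\in S_b$, the direct sum $\alpha\oplus\beta\in S_{a+b}$ is $\alpha_1\cdots\alpha_a(\beta_1+a)\cdots(\beta_b+a)$ and the skew sum $\alpha\ominus\beta\in S_{a+b}$ is $(\alpha_1+b)\cdots(\alpha_a+b)\beta_1\cdots\beta_b$. *)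

theory Defs
  imports Main
begin

text \<open>Permutations of [n] = {1..n} in one-line notation, as lists: the list xs
  represents pi with pi_i = xs ! (i - 1).\<close>

definition perm_fun :: "nat list \<Rightarrow> nat \<Rightarrow> nat" where
  "perm_fun xs i = xs ! (i - 1)"

definition Dsum :: "nat list \<Rightarrow> int" where
  "Dsum xs = (\<Sum>i = 1..length xs. \<bar>int (perm_fun xs i) - int i\<bar>)"

definition Inv :: "nat list \<Rightarrow> nat" where
  "Inv xs = card {(i, j). 1 \<le> i \<and> i < j \<and> j \<le> length xs \<and> perm_fun xs i > perm_fun xs j}"

definition cyc :: "nat list \<Rightarrow> nat" where
  "cyc xs = card ({1..length xs} //
     {(a, b). a \<in> {1..length xs} \<and> b \<in> {1..length xs} \<and> (\<exists>k. (perm_fun xs ^^ k) a = b)})"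

definition Tcyc :: "nat list \<Rightarrow> int" where
  "Tcyc xs = int (length xs) - int (cyc xs)"

definition shallow :: "nat list \<Rightarrow> bool" where
  "shallow xs \<longleftrightarrow> int (Inv xs) + Tcyc xs = Dsum xs"

definition delta :: "nat \<Rightarrow> nat list" where
  "delta m = rev [1..<m+1]"

definition direct_sum :: "nat list \<Rightarrow> nat list \<Rightarrow> nat list" (infixl "\<oplus>\<^sub>p" 65) where
  "\<alpha> \<oplus>\<^sub>p \<beta> = \<alpha> @ map (\<lambda>x. x + length \<alpha>) \<beta>"

definition skew_sum :: "nat list \<Rightarrow> nat list \<Rightarrow> nat list" (infixl "\<ominus>\<^sub>p" 65) where
  "\<alpha> \<ominus>\<^sub>p \<beta> = map (\<lambda>x. x + length \<beta>) \<alpha> @ \<beta>"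

end

theory Submission
  imports Defs
begin

text \<open>The inversion number and the total displacement are additive over the blocks of a
  skew or direct sum up to explicit correction terms, and the displacement of a decreasing run
  whose entries are all shifted by c is an explicit quadratic in its length and c.  The number of
  cycles is computed by deleting points: deleting x from a permutation (sending the preimage of x
  straight to the image of x) removes a cycle if x is a fixed point and no cycle otherwise, and
  deleting suitable points from each of the three families produces the same family with
  smaller parameters.  Comparing the resulting closed forms gives I + T = D.\<close>

section \<open>Orbits of a permutation of a finite set\<close>

definition orbit_rel :: "'a set \<Rightarrow> ('a \<Rightarrow> 'a) \<Rightarrow> ('a \<times> 'a) set" where
  "orbit_rel S f = {(a, b). a \<in> S \<and> b \<in> S \<and> (\<exists>k. (f ^^ k) a = b)}"

definition orbit_count :: "'a set \<Rightarrow> ('a \<Rightarrow> 'a) \<Rightarrow> nat" where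
  "orbit_count S f = card (S // orbit_rel S f)"

lemma cyc_eq_orbit_count: "cyc xs = orbit_count {1..length xs} (perm_fun xs)"
  by (simp add: cyc_def orbit_count_def orbit_rel_def)

lemma funpow_period:
  assumes fin: "finite S" and f: "bij_betw f S S" and a: "a \<in> S"
  obtains p where "0 < p" "(f ^^ p) a = a"
proof -
  have "\<not> inj_on (\<lambda>t. (f ^^ t) a) {0..card S}"
  proof
    assume "inj_on (\<lambda>t. (f ^^ t) a) {0..card S}"
    moreover have "(\<lambda>t. (f ^^ t) a) ` {0..card S} \<subseteq> S"
      using bij_betw_apply[OF bij_betw_funpow[OF f] a] by blast
    ultimately have "card {0..card S} \<le> card S" by (rule card_inj_on_le[OF _ _ fin])
    then show False by simp
  qed
  then obtain s t where st: "s \<noteq> t" "(f ^^ s) a = (f ^^ t) a" unfolding inj_on_def by blast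
  obtain u v where uv: "u < v" "(f ^^ u) a = (f ^^ v) a"
  proof (cases "s < t")
    case True
    with st show ?thesis by (intro that)
  next
    case False
    with st show ?thesis by (intro that[of t s]) auto
  qed
  have "(f ^^ u) ((f ^^ (v - u)) a) = (f ^^ (u + (v - u))) a" by (simp add: funpow_add)
  also have "\<dots> = (f ^^ u) a" using uv by simp
  finally have "(f ^^ (v - u)) a = a"
    by (rule inj_onD[OF bij_betw_imp_inj_on[OF bij_betw_funpow[OF f]] _
          bij_betw_apply[OF bij_betw_funpow[OF f] a] a])
  then show ?thesis using that[of "v - u"] uv(1) by simp
qed

lemma equiv_orbit_rel:
  assumes fin: "finite S" and f: "bij_betw f S S"
  shows "equiv S (orbit_rel S f)"
proof (rule equivI)
  show "orbit_rel S f \<subseteq> S \<times> S" unfolding orbit_rel_def by auto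
  show "refl_on S (orbit_rel S f)" unfolding refl_on_def orbit_rel_def
    by (auto intro: exI[of _ 0])
  show "trans (orbit_rel S f)" unfolding trans_def orbit_rel_def
  proof clarsimp
    fix a k m
    show "\<exists>n. (f ^^ n) a = (f ^^ m) ((f ^^ k) a)"
      by (intro exI[of _ "m + k"]) (simp add: funpow_add)
  qed
  show "sym (orbit_rel S f)" unfolding sym_def orbit_rel_def
  proof clarsimp
    fix a k assume a: "a \<in> S"
    obtain p where p: "0 < p" "(f ^^ p) a = a" using funpow_period[OF fin f a] .
    have "(f ^^ (p * m)) a = a" for m by (induction m) (simp_all add: funpow_add p(2))
    moreover have "(f ^^ (p * k - k)) ((f ^^ k) a) = (f ^^ (p * k)) a"
      using p(1) funpow_add[of "p * k - k" k f] by simp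
    ultimately show "\<exists>m. (f ^^ m) ((f ^^ k) a) = a" by (intro exI[of _ "p * k - k"]) simp
  qed
qed

lemma quotient_obtain_other_rep:
  assumes R: "equiv S R" and A: "A \<in> S // R" "A \<noteq> {x}"
  obtains b where "b \<in> A - {x}" "A = R `` {b}"
proof -
  obtain b where b: "b \<in> A" "b \<noteq> x" using in_quotient_imp_non_empty[OF R A(1)] A(2) by blast
  obtain a where a: "A = R `` {a}" using A(1) by (rule quotientE)
  with b(1) have "(a, b) \<in> R" by simp
  with a have "A = R `` {b}" using equiv_class_eq[OF R] by simp
  with b that show ?thesis by blast
qed

lemma quotient_Restr_Diff_singleton:
  assumes R: "equiv S R"
  shows "(S - {x}) // (R \<inter> (S - {x}) \<times> (S - {x})) = (\<lambda>A. A - {x}) ` (S // R - {{x}})"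
proof -
  let ?S' = "S - {x}" and ?R' = "R \<inter> (S - {x}) \<times> (S - {x})"
  have restricted_class: "?R' `` {b} = R `` {b} - {x}" if "b \<in> ?S'" for b
    using equiv_type[OF R] that by auto
  show ?thesis
  proof
    show "?S' // ?R' \<subseteq> (\<lambda>A. A - {x}) ` (S // R - {{x}})"
    proof
      fix C assume "C \<in> ?S' // ?R'"
      then obtain b where b: "b \<in> ?S'" "C = ?R' `` {b}" by (rule quotientE)
      then have "R `` {b} \<in> S // R - {{x}}"
        using equiv_class_self[OF R] by (auto intro: quotientI)
      then show "C \<in> (\<lambda>A. A - {x}) ` (S // R - {{x}})" using b restricted_class by auto
    qed
    show "(\<lambda>A. A - {x}) ` (S // R - {{x}}) \<subseteq> ?S' // ?R'"
    proof
      fix C assume "C \<in> (\<lambda>A. A - {x}) ` (S // R - {{x}})"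
      then obtain A where A: "A \<in> S // R" "A \<noteq> {x}" "C = A - {x}" by auto
      obtain b where b: "b \<in> A - {x}" "A = R `` {b}"
        by (rule quotient_obtain_other_rep[OF R A(1,2)])
      have "b \<in> ?S'" using b in_quotient_imp_subset[OF R A(1)] by blast
      then show "C \<in> ?S' // ?R'" using A(3) b(2) restricted_class quotientI[of b ?S' ?R'] by simp
    qed
  qed
qed

lemma inj_on_Diff_singleton_quotient:
  assumes R: "equiv S R"
  shows "inj_on (\<lambda>A. A - {x}) (S // R - {{x}})"
proof (rule inj_onI)
  fix A B assume A: "A \<in> S // R - {{x}}" and B: "B \<in> S // R - {{x}}" and eq: "A - {x} = B - {x}"
  from A have "A \<in> S // R" "A \<noteq> {x}" by auto
  then obtain b where "b \<in> A - {x}" "A = R `` {b}" by (rule quotient_obtain_other_rep[OF R])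
  then show "A = B" using quotient_disj[OF R, of A B] A B eq by blast
qed

lemma singleton_in_quotient_iff:
  assumes R: "equiv S R" and x: "x \<in> S"
  shows "{x} \<in> S // R \<longleftrightarrow> R `` {x} = {x}"
proof
  assume "{x} \<in> S // R"
  then obtain a where a: "a \<in> S" "{x} = R `` {a}" by (rule quotientE)
  have "a \<in> {x}" unfolding a(2) by (rule equiv_class_self[OF R a(1)])
  then have "a = x" by simp
  with a show "R `` {x} = {x}" by simp
qed (use x quotientI[of x S R] in simp)

lemma card_quotient_Diff_singleton:
  assumes R: "equiv S R" and x: "x \<in> S" and fin: "finite S"
  shows "card (S // R) = card ((S - {x}) // (R \<inter> (S - {x}) \<times> (S - {x})))
           + (if R `` {x} = {x} then 1 else 0)"
proof -
  have "finite (S // R)" using finite_quotient[OF fin equiv_type[OF R]] .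
  then have "card (S // R) = card (S // R - {{x}}) + (if {x} \<in> S // R then 1 else 0)"
    using card_Suc_Diff1[of "S // R" "{x}"] by auto
  then show ?thesis
    by (simp add: quotient_Restr_Diff_singleton[OF R] card_image
        inj_on_Diff_singleton_quotient[OF R] singleton_in_quotient_iff[OF R x])
qed

lemma funpow_conj:
  assumes f: "bij_betw f S S" and comm: "\<And>a. a \<in> S \<Longrightarrow> h (f a) = g (h a)" and a: "a \<in> S"
  shows "h ((f ^^ k) a) = (g ^^ k) (h a)"
proof (induction k)
  case (Suc k)
  have "(f ^^ k) a \<in> S" using bij_betw_apply[OF bij_betw_funpow[OF f] a] .
  with Suc show ?case by (simp add: comm)
qed simp

lemma orbit_rel_Image_conj:
  assumes h: "bij_betw h S T" and f: "bij_betw f S S"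
    and comm: "\<And>a. a \<in> S \<Longrightarrow> h (f a) = g (h a)" and a: "a \<in> S"
  shows "orbit_rel T g `` {h a} = h ` (orbit_rel S f `` {a})"
proof -
  have rel: "(h a, h b) \<in> orbit_rel T g \<longleftrightarrow> (a, b) \<in> orbit_rel S f" if b: "b \<in> S" for b
  proof -
    have "(g ^^ k) (h a) = h b \<longleftrightarrow> (f ^^ k) a = b" for k
      using inj_on_eq_iff[OF bij_betw_imp_inj_on[OF h]
          bij_betw_apply[OF bij_betw_funpow[OF f] a] b]
      by (simp add: funpow_conj[where h = h and g = g, OF f comm a])
    then show ?thesis using a b bij_betw_apply[OF h] unfolding orbit_rel_def by auto
  qed
  show ?thesis
  proof (intro equalityI subsetI)
    fix c assume c: "c \<in> orbit_rel T g `` {h a}"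
    then have "c \<in> h ` S"
      using bij_betw_imp_surj_on[OF h] unfolding orbit_rel_def by auto
    then obtain b where "b \<in> S" "c = h b" by blast
    with c rel show "c \<in> h ` (orbit_rel S f `` {a})" by auto
  next
    fix c assume "c \<in> h ` (orbit_rel S f `` {a})"
    then obtain b where b: "(a, b) \<in> orbit_rel S f" "c = h b" by auto
    moreover have "b \<in> S" using b(1) unfolding orbit_rel_def by simp
    ultimately show "c \<in> orbit_rel T g `` {h a}" using rel by simp
  qed
qed

lemma orbit_count_conj:
  assumes h: "bij_betw h S T" and f: "bij_betw f S S"
    and comm: "\<And>a. a \<in> S \<Longrightarrow> h (f a) = g (h a)"
  shows "orbit_count T g = orbit_count S f"
proof -
  have "T // orbit_rel T g = (\<lambda>a. orbit_rel T g `` {h a}) ` S"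
    by (simp add: quotient_def UNION_singleton_eq_range bij_betw_imp_surj_on[OF h, symmetric]
        image_image)
  also have "\<dots> = (image h) ` (S // orbit_rel S f)"
    by (simp add: quotient_def UNION_singleton_eq_range image_image
        orbit_rel_Image_conj[OF h f comm])
  finally have quot: "T // orbit_rel T g = (image h) ` (S // orbit_rel S f)" .
  have "inj_on (image h) (S // orbit_rel S f)"
    by (rule inj_on_subset[OF inj_on_image_Pow[OF bij_betw_imp_inj_on[OF h]]])
       (auto simp: quotient_def orbit_rel_def)
  then show ?thesis unfolding orbit_count_def quot by (simp add: card_image)
qed

lemma orbit_count_cong:
  assumes f: "bij_betw f S S" and eq: "\<And>a. a \<in> S \<Longrightarrow> f a = g a"
  shows "orbit_count S g = orbit_count S f"
  by (rule orbit_count_conj[OF bij_betw_id f]) (simp add: eq)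

definition skip :: "'a \<Rightarrow> ('a \<Rightarrow> 'a) \<Rightarrow> 'a \<Rightarrow> 'a" where
  "skip x f y = (if f y = x then f x else f y)"

lemma bij_betw_skip:
  assumes fin: "finite S" and f: "bij_betw f S S" and x: "x \<in> S"
  shows "bij_betw (skip x f) (S - {x}) (S - {x})"
proof -
  have inj: "inj_on f S" using bij_betw_imp_inj_on[OF f] .
  have into: "skip x f ` (S - {x}) \<subseteq> S - {x}"
  proof
    fix z assume "z \<in> skip x f ` (S - {x})"
    then obtain y where y: "y \<in> S - {x}" "z = skip x f y" by auto
    show "z \<in> S - {x}"
    proof (cases "f y = x")
      case True
      then have "f x \<noteq> x" using inj y x unfolding inj_on_def by auto
      then show ?thesis using True y bij_betw_apply[OF f x] by (simp add: skip_def)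
    next
      case False
      then show ?thesis using y bij_betw_apply[OF f] by (simp add: skip_def)
    qed
  qed
  have "inj_on (skip x f) (S - {x})"
  proof (rule inj_onI)
    fix y z assume y: "y \<in> S - {x}" and z: "z \<in> S - {x}" and e: "skip x f y = skip x f z"
    consider "f y = x" "f z = x" | "f y = x" "f z \<noteq> x" | "f y \<noteq> x" "f z = x"
      | "f y \<noteq> x" "f z \<noteq> x" by blast
    then show "y = z"
    proof cases
      case 1 then show ?thesis using inj y z unfolding inj_on_def by auto
    next
      case 2 then have "f x = f z" using e by (simp add: skip_def)
      then show ?thesis using inj z x unfolding inj_on_def by auto
    next
      case 3 then have "f y = f x" using e by (simp add: skip_def)
      then show ?thesis using inj y x unfolding inj_on_def by auto
    next
      case 4 then have "f y = f z" using e by (simp add: skip_def)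
      then show ?thesis using inj y z unfolding inj_on_def by auto
    qed
  qed
  then show ?thesis using endo_inj_surj[OF _ into] fin by (simp add: bij_betw_def)
qed

lemma funpow_skip_is_funpow: "\<exists>k. (skip x f ^^ m) a = (f ^^ k) a"
proof (induction m)
  case 0
  show ?case by (auto intro: exI[of _ 0])
next
  case (Suc m)
  then obtain k where k: "(skip x f ^^ m) a = (f ^^ k) a" by blast
  show ?case
  proof (cases "f ((f ^^ k) a) = x")
    case True
    then have "(skip x f ^^ Suc m) a = (f ^^ Suc (Suc k)) a" using k by (simp add: skip_def)
    then show ?thesis by blast
  next
    case False
    then have "(skip x f ^^ Suc m) a = (f ^^ Suc k) a" using k by (simp add: skip_def)
    then show ?thesis by blast
  qed
qed

lemma funpow_is_funpow_skip:
  assumes a: "a \<noteq> x"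
  shows "\<exists>m. (skip x f ^^ m) a = (if (f ^^ k) a = x then f x else (f ^^ k) a)"
proof (induction k)
  case 0
  show ?case using a by (auto intro: exI[of _ 0])
next
  case (Suc k)
  then obtain m where m: "(skip x f ^^ m) a = (if (f ^^ k) a = x then f x else (f ^^ k) a)"
    by blast
  show ?case
  proof (cases "(f ^^ k) a = x")
    case True
    then have "(f ^^ Suc k) a = f x" by simp
    then show ?thesis using m True by (cases "f x = x") auto
  next
    case False
    show ?thesis
    proof (cases "(f ^^ Suc k) a = x")
      case True
      then have "(skip x f ^^ Suc m) a = f x" using m False by (simp add: skip_def)
      then show ?thesis using True by metis
    next
      case False': False
      then have "(skip x f ^^ Suc m) a = (f ^^ Suc k) a" using m False by (simp add: skip_def)
      then show ?thesis using False' by metis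
    qed
  qed
qed

lemma orbit_rel_skip:
  "orbit_rel (S - {x}) (skip x f) = orbit_rel S f \<inter> (S - {x}) \<times> (S - {x})"
proof -
  have "(\<exists>m. (skip x f ^^ m) a = b) \<longleftrightarrow> (\<exists>k. (f ^^ k) a = b)"
    if ab: "a \<in> S - {x}" "b \<in> S - {x}" for a b
  proof
    assume "\<exists>m. (skip x f ^^ m) a = b"
    then show "\<exists>k. (f ^^ k) a = b" using funpow_skip_is_funpow by metis
  next
    assume "\<exists>k. (f ^^ k) a = b"
    then obtain k where "(f ^^ k) a = b" by blast
    then show "\<exists>m. (skip x f ^^ m) a = b" using funpow_is_funpow_skip[of a x f k] ab by auto
  qed
  then show ?thesis unfolding orbit_rel_def by blast
qed

lemma orbit_rel_Image_fixed_point: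
  assumes f: "bij_betw f S S" and x: "x \<in> S"
  shows "orbit_rel S f `` {x} = {x} \<longleftrightarrow> f x = x"
proof
  assume "orbit_rel S f `` {x} = {x}"
  moreover have "f x \<in> orbit_rel S f `` {x}"
    using x bij_betw_apply[OF f x] unfolding orbit_rel_def by (auto intro: exI[of _ 1])
  ultimately show "f x = x" by auto
next
  assume fx: "f x = x"
  have "(f ^^ k) x = x" for k by (induction k) (simp_all add: fx)
  then show "orbit_rel S f `` {x} = {x}" using x unfolding orbit_rel_def by auto
qed

lemma orbit_count_skip:
  assumes fin: "finite S" and f: "bij_betw f S S" and x: "x \<in> S"
  shows "orbit_count S f = orbit_count (S - {x}) (skip x f) + (if f x = x then 1 else 0)"
  using card_quotient_Diff_singleton[OF equiv_orbit_rel[OF fin f] x fin]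
  by (simp add: orbit_count_def orbit_rel_skip orbit_rel_Image_fixed_point[OF f x])

section \<open>Deleting a point from a permutation of {1..n}\<close>

definition squeeze :: "nat \<Rightarrow> nat \<Rightarrow> nat" where
  "squeeze x y = (if y < x then y else y - 1)"

definition unsqueeze :: "nat \<Rightarrow> nat \<Rightarrow> nat" where
  "unsqueeze x p = (if p < x then p else Suc p)"

definition delete_point :: "nat \<Rightarrow> (nat \<Rightarrow> nat) \<Rightarrow> nat \<Rightarrow> nat" where
  "delete_point x f = squeeze x \<circ> skip x f \<circ> unsqueeze x"

lemma bij_betw_squeeze:
  assumes "x \<in> {1..n}"
  shows "bij_betw (squeeze x) ({1..n} - {x}) {1..n-1}"
  using assms
  by (intro bij_betw_byWitness[where f' = "unsqueeze x"]) (auto simp: squeeze_def unsqueeze_def)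

lemma bij_betw_unsqueeze:
  assumes "x \<in> {1..n}"
  shows "bij_betw (unsqueeze x) {1..n-1} ({1..n} - {x})"
  using assms
  by (intro bij_betw_byWitness[where f' = "squeeze x"]) (auto simp: squeeze_def unsqueeze_def)

lemma delete_point_below: "p < x \<Longrightarrow> delete_point x f p = squeeze x (skip x f p)"
  by (simp add: delete_point_def unsqueeze_def)

lemma delete_point_above: "x \<le> p \<Longrightarrow> delete_point x f p = squeeze x (skip x f (Suc p))"
  by (simp add: delete_point_def unsqueeze_def)

lemma orbit_count_delete_point:
  assumes f: "bij_betw f {1..n} {1..n}" and x: "x \<in> {1..n}"
    and g: "\<And>p. p \<in> {1..n-1} \<Longrightarrow> delete_point x f p = g p"
  shows "orbit_count {1..n} f = orbit_count {1..n-1} g + (if f x = x then 1 else 0)"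
    and "bij_betw g {1..n-1} {1..n-1}"
proof -
  let ?S = "{1..n} - {x}"
  have skip: "bij_betw (skip x f) ?S ?S" by (rule bij_betw_skip[OF finite_atLeastAtMost f x])
  have "bij_betw (delete_point x f) {1..n-1} {1..n-1}"
    unfolding delete_point_def comp_assoc
    by (rule bij_betw_trans[OF bij_betw_trans[OF bij_betw_unsqueeze[OF x] skip]
          bij_betw_squeeze[OF x]])
  moreover have "bij_betw (delete_point x f) {1..n-1} {1..n-1} = bij_betw g {1..n-1} {1..n-1}"
    by (rule bij_betw_cong) (rule g)
  ultimately show "bij_betw g {1..n-1} {1..n-1}" by simp
  have comm: "squeeze x (skip x f a) = g (squeeze x a)" if a: "a \<in> ?S" for a
  proof -
    have "unsqueeze x (squeeze x a) = a" using a by (auto simp: squeeze_def unsqueeze_def)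
    then show ?thesis
      using g[OF bij_betw_apply[OF bij_betw_squeeze[OF x] a]] by (simp add: delete_point_def)
  qed
  have "orbit_count {1..n} f = orbit_count ?S (skip x f) + (if f x = x then 1 else 0)"
    by (rule orbit_count_skip[OF finite_atLeastAtMost f x])
  moreover have "orbit_count {1..n-1} g = orbit_count ?S (skip x f)"
    by (rule orbit_count_conj[OF bij_betw_squeeze[OF x] skip]) (rule comm)
  ultimately show "orbit_count {1..n} f = orbit_count {1..n-1} g + (if f x = x then 1 else 0)"
    by simp
qed

lemma orbit_count_delete_two_points:
  assumes f: "bij_betw f {1..n} {1..n}" and x: "x \<in> {1..n}" and y: "y \<in> {1..n-1}"
    and g: "\<And>p. p \<in> {1..n-2} \<Longrightarrow> delete_point y (delete_point x f) p = g p"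
  shows "orbit_count {1..n} f = orbit_count {1..n-2} g
           + (if f x = x then 1 else 0) + (if delete_point x f y = y then 1 else 0)"
    and "bij_betw g {1..n-2} {1..n-2}"
proof -
  have n2: "n - 1 - 1 = n - 2" by simp
  note first = orbit_count_delete_point[OF f x refl]
  note second = orbit_count_delete_point[OF first(2) y, of g, unfolded n2, OF g]
  show "orbit_count {1..n} f = orbit_count {1..n-2} g
           + (if f x = x then 1 else 0) + (if delete_point x f y = y then 1 else 0)"
    using first(1) second(1) by simp
  show "bij_betw g {1..n-2} {1..n-2}" by (rule second(2))
qed

definition reversal :: "nat \<Rightarrow> nat \<Rightarrow> nat" where
  "reversal m p = m + 1 - p"

lemma bij_betw_reversal: "bij_betw (reversal m) {1..m} {1..m}"
  by (intro bij_betw_byWitness[where f' = "reversal m"]) (auto simp: reversal_def)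

lemma orbit_count_reversal: "orbit_count {1..m} (reversal m) = (m + 1) div 2"
proof (induction m rule: less_induct)
  case (less m)
  consider "m = 0" | "m = 1" | m' where "m = Suc (Suc m')" by (metis One_nat_def not0_implies_Suc)
  then show ?case
  proof cases
    case 1
    then show ?thesis by (simp add: orbit_count_def)
  next
    case 2
    have "orbit_count {1..1} (reversal 1) = orbit_count ({} :: nat set) id + 1"
      using orbit_count_delete_point(1)[OF bij_betw_reversal[of 1], of 1 id]
      by (simp add: reversal_def)
    moreover have "orbit_count ({} :: nat set) id = 0" by (simp add: orbit_count_def)
    ultimately show ?thesis using 2 by simp
  next
    case 3
    have "orbit_count {1..m} (reversal m) = orbit_count {1..m-2} (reversal m')
            + (if reversal m m = m then 1 else 0)
            + (if delete_point m (reversal m) 1 = 1 then 1 else 0)"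
      by (rule orbit_count_delete_two_points(1)[OF bij_betw_reversal])
         (use 3 in \<open>auto simp: reversal_def delete_point_def skip_def squeeze_def unsqueeze_def\<close>)
    also have "\<dots> = orbit_count {1..m'} (reversal m') + 1"
      using 3 by (simp add: reversal_def delete_point_def skip_def squeeze_def unsqueeze_def)
    finally show ?thesis using less[of m'] 3 by simp
  qed
qed

section \<open>Permutations in one-line notation\<close>

definition is_perm_list :: "nat list \<Rightarrow> bool" where
  "is_perm_list xs \<longleftrightarrow> set xs = {1..length xs}"

lemma image_perm_fun: "perm_fun xs ` {1..length xs} = set xs"
proof
  show "perm_fun xs ` {1..length xs} \<subseteq> set xs" by (auto simp: perm_fun_def)
  show "set xs \<subseteq> perm_fun xs ` {1..length xs}"
  proof
    fix y assume "y \<in> set xs"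
    then obtain j where "j < length xs" "y = xs ! j" by (auto simp: in_set_conv_nth)
    then show "y \<in> perm_fun xs ` {1..length xs}"
      by (auto simp: perm_fun_def intro!: image_eqI[of _ _ "Suc j"])
  qed
qed

lemma bij_betw_perm_fun:
  "is_perm_list xs \<Longrightarrow> bij_betw (perm_fun xs) {1..length xs} {1..length xs}"
  unfolding bij_betw_def is_perm_list_def using image_perm_fun[of xs]
  by (simp add: inj_on_iff_eq_card)

lemma cyc_eq_orbit_count_of:
  assumes xs: "is_perm_list xs" and n: "length xs = n"
    and f: "\<And>p. p \<in> {1..n} \<Longrightarrow> perm_fun xs p = f p"
  shows "cyc xs = orbit_count {1..n} f" and "bij_betw f {1..n} {1..n}"
proof -
  have bij: "bij_betw (perm_fun xs) {1..n} {1..n}" using bij_betw_perm_fun[OF xs] n by simp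
  show "cyc xs = orbit_count {1..n} f"
    using cyc_eq_orbit_count[of xs] orbit_count_cong[OF bij f] n by simp
  have "bij_betw (perm_fun xs) {1..n} {1..n} = bij_betw f {1..n} {1..n}"
    by (rule bij_betw_cong) (rule f)
  with bij show "bij_betw f {1..n} {1..n}" by simp
qed

lemma length_skew_sum [simp]: "length (a \<ominus>\<^sub>p b) = length a + length b"
  by (simp add: skew_sum_def)

lemma length_direct_sum [simp]: "length (a \<oplus>\<^sub>p b) = length a + length b"
  by (simp add: direct_sum_def)

lemma length_delta [simp]: "length (delta m) = m"
  by (simp add: delta_def)

lemma delta_0: "delta 0 = []"
  by (simp add: delta_def)

lemma delta_Suc: "delta (Suc m) = Suc m # delta m"
  by (simp add: delta_def)

lemma set_delta: "set (delta m) = {1..m}"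
  by (auto simp: delta_def)

lemma is_perm_list_delta: "is_perm_list (delta m)"
  by (simp add: is_perm_list_def set_delta)

lemma is_perm_list_skew_sum:
  "is_perm_list a \<Longrightarrow> is_perm_list b \<Longrightarrow> is_perm_list (a \<ominus>\<^sub>p b)"
  by (auto simp: is_perm_list_def skew_sum_def image_add_atLeastAtMost')

lemma is_perm_list_direct_sum:
  "is_perm_list a \<Longrightarrow> is_perm_list b \<Longrightarrow> is_perm_list (a \<oplus>\<^sub>p b)"
  by (auto simp: is_perm_list_def direct_sum_def image_add_atLeastAtMost')

lemma perm_fun_skew_sum:
  "1 \<le> p \<Longrightarrow> p \<le> length a + length b \<Longrightarrow> perm_fun (a \<ominus>\<^sub>p b) p =
     (if p \<le> length a then perm_fun a p + length b else perm_fun b (p - length a))"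
  by (auto simp: perm_fun_def skew_sum_def nth_append)

lemma perm_fun_direct_sum:
  "1 \<le> p \<Longrightarrow> p \<le> length a + length b \<Longrightarrow> perm_fun (a \<oplus>\<^sub>p b) p =
     (if p \<le> length a then perm_fun a p else perm_fun b (p - length a) + length a)"
  by (auto simp: perm_fun_def direct_sum_def nth_append)

lemma perm_fun_delta: "1 \<le> p \<Longrightarrow> p \<le> m \<Longrightarrow> perm_fun (delta m) p = m + 1 - p"
  unfolding perm_fun_def delta_def by (subst rev_nth; simp del: upt_Suc)

lemma perm_fun_singleton: "p \<le> 1 \<Longrightarrow> perm_fun [x] p = x"
  by (simp add: perm_fun_def)

lemma perm_fun_pair: "p \<le> 2 \<Longrightarrow> perm_fun [x, y] p = (if p \<le> 1 then x else y)"
  by (cases p) (auto simp: perm_fun_def)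

section \<open>Inversions\<close>

fun inv_count :: "nat list \<Rightarrow> nat" where
  "inv_count [] = 0"
| "inv_count (x # xs) = length (filter (\<lambda>y. y < x) xs) + inv_count xs"

lemma card_inversions_at_head:
  "card {(i, j). i = 1 \<and> 2 \<le> j \<and> j \<le> Suc (length xs) \<and> xs ! (j - 2) < x}
     = length (filter (\<lambda>y. y < x) xs)"
proof -
  have "card {(i, j). i = 1 \<and> 2 \<le> j \<and> j \<le> Suc (length xs) \<and> xs ! (j - 2) < x}
      = card {j. 2 \<le> j \<and> j \<le> Suc (length xs) \<and> xs ! (j - 2) < x}"
    by (rule bij_betw_same_card[of snd]) (auto simp: bij_betw_def inj_on_def image_def)
  also have "\<dots> = card {q. q < length xs \<and> xs ! q < x}"
    by (rule bij_betw_same_card[of "\<lambda>j. j - 2"])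
       (auto simp: bij_betw_def inj_on_def image_def intro!: exI[of _ "_ + 2"])
  also have "\<dots> = length (filter (\<lambda>y. y < x) xs)" by (simp add: length_filter_conv_card)
  finally show ?thesis .
qed

lemma inversion_pairs_Cons:
  "{(i, j). 1 \<le> i \<and> i < j \<and> j \<le> length (x # xs) \<and> perm_fun (x # xs) i > perm_fun (x # xs) j}
   = {(i, j). i = 1 \<and> 2 \<le> j \<and> j \<le> Suc (length xs) \<and> xs ! (j - 2) < x}
     \<union> (\<lambda>(i, j). (Suc i, Suc j)) `
         {(i, j). 1 \<le> i \<and> i < j \<and> j \<le> length xs \<and> perm_fun xs i > perm_fun xs j}"
  (is "?P (x # xs) = ?A \<union> ?B")
proof (rule set_eqI, clarify)
  fix i j
  show "(i, j) \<in> ?P (x # xs) \<longleftrightarrow> (i, j) \<in> ?A \<union> ?B"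
  proof (cases "i = 1")
    case True then show ?thesis by (auto simp: perm_fun_def nth_Cons' numeral_2_eq_2)
  next
    case False
    show ?thesis
    proof
      assume "(i, j) \<in> ?P (x # xs)"
      then have h: "2 \<le> i" "i < j" "j \<le> Suc (length xs)" "xs ! (i - 2) > xs ! (j - 2)"
        using False by (auto simp: perm_fun_def nth_Cons' numeral_2_eq_2)
      then have "(i - 1, j - 1) \<in> ?P xs" by (auto simp: perm_fun_def numeral_2_eq_2)
      moreover have "(i, j) = (Suc (i - 1), Suc (j - 1))" using h by auto
      ultimately have "(i, j) \<in> ?B" by (metis (no_types, lifting) case_prod_conv image_eqI)
      then show "(i, j) \<in> ?A \<union> ?B" by blast
    next
      assume "(i, j) \<in> ?A \<union> ?B"
      then have "(i, j) \<in> ?B" using False by auto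
      then obtain a b where "(a, b) \<in> ?P xs" "i = Suc a" "j = Suc b" by auto
      then show "(i, j) \<in> ?P (x # xs)" by (auto simp: perm_fun_def nth_Cons')
    qed
  qed
qed

lemma Inv_Cons: "Inv (x # xs) = length (filter (\<lambda>y. y < x) xs) + Inv xs"
proof -
  let ?A = "{(i, j). i = 1 \<and> 2 \<le> j \<and> j \<le> Suc (length xs) \<and> xs ! (j - 2) < x}"
  let ?P = "{(i, j). 1 \<le> i \<and> i < j \<and> j \<le> length xs \<and> perm_fun xs i > perm_fun xs j}"
  let ?B = "(\<lambda>(i, j). (Suc i, Suc j)) ` ?P"
  have finA: "finite ?A" by (rule finite_subset[of _ "{1} \<times> {0..Suc (length xs)}"]) auto
  have "finite ?P" by (rule finite_subset[of _ "{0..length xs} \<times> {0..length xs}"]) auto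
  then have finB: "finite ?B" by simp
  have disj: "?A \<inter> ?B = {}" by auto
  have cardB: "card ?B = Inv xs" unfolding Inv_def by (rule card_image) (auto simp: inj_on_def)
  show ?thesis
    unfolding Inv_def[of "x # xs"] inversion_pairs_Cons card_Un_disjoint[OF finA finB disj]
      card_inversions_at_head cardB ..
qed

lemma Inv_eq_inv_count: "Inv xs = inv_count xs"
proof (induction xs)
  case Nil
  have "Inv [] = card ({} :: (nat \<times> nat) set)"
    unfolding Inv_def by (rule arg_cong[where f = card]) auto
  then show ?case by simp
next
  case (Cons x xs)
  then show ?case by (simp add: Inv_Cons)
qed

lemma inv_count_append:
  "inv_count (xs @ ys) = inv_count xs + inv_count ys + (\<Sum>x\<leftarrow>xs. length (filter (\<lambda>y. y < x) ys))"
  by (induction xs) auto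

lemma inv_count_map_strict_mono: "strict_mono f \<Longrightarrow> inv_count (map f xs) = inv_count xs"
proof (induction xs)
  case (Cons x xs)
  have "filter (\<lambda>y. y < f x) (map f xs) = map f (filter (\<lambda>y. y < x) xs)"
    using Cons.prems by (simp add: filter_map comp_def strict_mono_less)
  then show ?case using Cons by simp
qed simp

lemma inv_count_map_add: "inv_count (map (\<lambda>x. x + c) xs) = inv_count xs"
  by (rule inv_count_map_strict_mono) (simp add: strict_mono_def)

lemma inv_count_skew_sum:
  assumes a: "is_perm_list a" and b: "is_perm_list b"
  shows "inv_count (a \<ominus>\<^sub>p b) = inv_count a + inv_count b + length a * length b"
proof -
  have "length (filter (\<lambda>y. y < x + length b) b) = length b" if "x \<in> set a" for x
    using that a b by (auto simp: is_perm_list_def filter_id_conv)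
  then have "(\<Sum>x\<leftarrow>map (\<lambda>x. x + length b) a. length (filter (\<lambda>y. y < x) b))
             = (\<Sum>x\<leftarrow>a. length b)"
    by (simp add: comp_def cong: map_cong)
  then show ?thesis by (simp add: skew_sum_def inv_count_append inv_count_map_add sum_list_triv)
qed

lemma inv_count_direct_sum:
  assumes a: "is_perm_list a" and b: "is_perm_list b"
  shows "inv_count (a \<oplus>\<^sub>p b) = inv_count a + inv_count b"
proof -
  have "filter (\<lambda>y. y < x) (map (\<lambda>y. y + length a) b) = []" if "x \<in> set a" for x
    using that a b by (auto simp: is_perm_list_def filter_empty_conv)
  then have "(\<Sum>x\<leftarrow>a. length (filter (\<lambda>y. y < x) (map (\<lambda>y. y + length a) b))) = (\<Sum>x\<leftarrow>a. 0)"
    by (simp cong: map_cong)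
  then show ?thesis by (simp add: direct_sum_def inv_count_append inv_count_map_add)
qed

lemma inv_count_delta: "2 * int (inv_count (delta m)) = int m * (int m - 1)"
proof (induction m)
  case (Suc m)
  have "length (filter (\<lambda>y. y < Suc m) (delta m)) = m"
    by (simp add: filter_id_conv set_delta)
  then show ?case using Suc by (simp add: delta_Suc algebra_simps)
qed (simp add: delta_0)

section \<open>Displacement\<close>

fun disp :: "int \<Rightarrow> nat list \<Rightarrow> int" where
  "disp c [] = 0"
| "disp c (x # xs) = \<bar>int x - 1 + c\<bar> + disp (c - 1) xs"

lemma sum_abs_perm_fun_eq_disp:
  "(\<Sum>i = 1..length xs. \<bar>int (perm_fun xs i) - int i + c\<bar>) = disp c xs"
proof (induction xs arbitrary: c)
  case (Cons x xs)
  have "(\<Sum>i = 1..length (x # xs). \<bar>int (perm_fun (x # xs) i) - int i + c\<bar>)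
      = \<bar>int x - 1 + c\<bar> + (\<Sum>i = Suc 1..Suc (length xs). \<bar>int (perm_fun (x # xs) i) - int i + c\<bar>)"
    by (subst sum.atLeast_Suc_atMost) (simp_all add: perm_fun_def)
  also have "(\<Sum>i = Suc 1..Suc (length xs). \<bar>int (perm_fun (x # xs) i) - int i + c\<bar>)
      = (\<Sum>i = 1..length xs. \<bar>int (perm_fun xs i) - int i + (c - 1)\<bar>)"
    unfolding sum.shift_bounds_cl_Suc_ivl
    by (rule sum.cong) (auto simp: perm_fun_def algebra_simps nth_Cons')
  finally show ?case using Cons by simp
qed simp

lemma Dsum_eq_disp: "Dsum xs = disp 0 xs"
  using sum_abs_perm_fun_eq_disp[of xs 0] by (simp add: Dsum_def)

lemma disp_append: "disp c (xs @ ys) = disp c xs + disp (c - int (length xs)) ys"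
  by (induction xs arbitrary: c) (auto simp: algebra_simps)

lemma disp_map_add: "disp c (map (\<lambda>x. x + s) xs) = disp (c + int s) xs"
  by (induction xs arbitrary: c) (auto simp: algebra_simps)

lemma disp_skew_sum: "disp c (a \<ominus>\<^sub>p b) = disp (c + int (length b)) a + disp (c - int (length a)) b"
  by (simp add: skew_sum_def disp_append disp_map_add)

lemma disp_direct_sum: "disp c (a \<oplus>\<^sub>p b) = disp c a + disp c b"
  by (simp add: direct_sum_def disp_append disp_map_add)

lemma disp_delta_formula_Suc:
  fixes c :: int and m :: nat
  shows "2 * \<bar>int m + c\<bar> + (if int m \<le> \<bar>c - 1\<bar> then 2 * int m * \<bar>c - 1\<bar>
                             else int m ^ 2 + (c - 1) ^ 2 - (int m + (c - 1)) mod 2)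
    = (if int (Suc m) \<le> \<bar>c\<bar> then 2 * int (Suc m) * \<bar>c\<bar>
       else int (Suc m) ^ 2 + c ^ 2 - (int (Suc m) + c) mod 2)"
proof -
  have "int (Suc m) + c = (int m + (c - 1)) + 2" by simp
  then have parity: "(int m + (c - 1)) mod 2 = (int (Suc m) + c) mod 2" by (metis mod_add_self2)
  consider "c \<ge> int m + 1" | "c \<le> - int m - 1" | "c = - int m" | "c = 1 - int m" "c \<le> int m"
    | "1 - int m < c" "c \<le> int m" by linarith
  then show ?thesis
  proof cases
    case 1
    then have "\<bar>c - 1\<bar> = c - 1" "\<bar>c\<bar> = c" "\<bar>int m + c\<bar> = int m + c" by auto
    then show ?thesis unfolding parity using 1 by (simp add: algebra_simps)
  next
    case 2
    then have "\<bar>c - 1\<bar> = 1 - c" "\<bar>c\<bar> = - c" "\<bar>int m + c\<bar> = - int m - c" by auto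
    then show ?thesis unfolding parity using 2 by (simp add: algebra_simps)
  next
    case 3
    then have "(int (Suc m) + c) mod 2 = 1" by simp
    then show ?thesis unfolding parity using 3 by (simp add: power2_eq_square algebra_simps)
  next
    case 4
    then have "(int (Suc m) + c) mod 2 = 0" "\<bar>c - 1\<bar> = int m" "\<bar>c\<bar> < int m + 1"
      "\<bar>int m + c\<bar> = 1" by auto
    then show ?thesis unfolding parity by (simp add: 4(1) power2_eq_square algebra_simps)
  next
    case 5
    then have "\<bar>c - 1\<bar> < int m" "\<bar>c\<bar> < int m + 1" "\<bar>int m + c\<bar> = int m + c" by auto
    then show ?thesis unfolding parity by (simp add: power2_eq_square algebra_simps)
  qed
qed

lemma disp_delta:
  "2 * disp c (delta m) =
     (if int m \<le> \<bar>c\<bar> then 2 * int m * \<bar>c\<bar> else int m ^ 2 + c ^ 2 - (int m + c) mod 2)"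
proof (induction m arbitrary: c)
  case (Suc m)
  have "2 * disp c (delta (Suc m)) = 2 * \<bar>int m + c\<bar> + 2 * disp (c - 1) (delta m)"
    by (simp add: delta_Suc algebra_simps)
  also have "\<dots> = (if int (Suc m) \<le> \<bar>c\<bar> then 2 * int (Suc m) * \<bar>c\<bar>
                   else int (Suc m) ^ 2 + c ^ 2 - (int (Suc m) + c) mod 2)"
    unfolding Suc[of "c - 1"] by (rule disp_delta_formula_Suc)
  finally show ?case .
qed (simp add: delta_0)

lemma disp_delta_large_shift: "int m \<le> \<bar>c\<bar> \<Longrightarrow> disp c (delta m) = int m * \<bar>c\<bar>"
  using disp_delta[of c m] by simp

lemma disp_delta_small_shift:
  assumes "\<bar>c\<bar> \<le> int m + 1"
  shows "2 * disp c (delta m) = int m ^ 2 + c ^ 2 - (int m + c) mod 2"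
proof (cases "int m \<le> \<bar>c\<bar>")
  case True
  then consider "c = int m" | "c = - int m" | "c = int m + 1" | "c = - int m - 1"
    using assms by linarith
  then have "2 * int m * \<bar>c\<bar> = int m ^ 2 + c ^ 2 - (int m + c) mod 2"
  proof cases
    case 1
    moreover have "(int m + int m) mod 2 = 0" by presburger
    ultimately show ?thesis by (simp add: power2_eq_square)
  next
    case 2
    then show ?thesis by (simp add: power2_eq_square)
  next
    case 3
    moreover have "(int m + (int m + 1)) mod 2 = 1" by presburger
    ultimately show ?thesis by (simp add: power2_eq_square algebra_simps)
  next
    case 4
    show ?thesis unfolding 4 by (simp add: power2_eq_square algebra_simps abs_if)
  qed
  then show ?thesis using disp_delta[of c m] True by simp
qed (use disp_delta[of c m] in simp)

section \<open>Cycle counts of the three families\<close>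

definition perm_d_1d :: "nat \<Rightarrow> nat \<Rightarrow> nat \<Rightarrow> nat" where
  "perm_d_1d i k p = (if p \<le> i then i + k + 2 - p else if p = i + 1 then 1 else i + k + 3 - p)"

definition perm_d_d1 :: "nat \<Rightarrow> nat \<Rightarrow> nat \<Rightarrow> nat" where
  "perm_d_d1 i j p = (if p \<le> i then i + j + 2 - p else if p \<le> i + j then i + j + 1 - p else j + 1)"

definition perm_21_dd :: "nat \<Rightarrow> nat \<Rightarrow> nat \<Rightarrow> nat" where
  "perm_21_dd j k p = (if p = 1 then j + k + 2 else if p = 2 then j + k + 1
     else if p \<le> j + 2 then j + 3 - p else 2 * j + k + 3 - p)"

lemma is_perm_list_singleton: "is_perm_list [1]"
  by (simp add: is_perm_list_def)

lemma is_perm_list_21: "is_perm_list [2, 1]"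
  by (auto simp: is_perm_list_def)

lemma perm_fun_d_1d:
  "p \<in> {1..i+k+1} \<Longrightarrow> perm_fun (delta i \<ominus>\<^sub>p ([1] \<oplus>\<^sub>p delta k)) p = perm_d_1d i k p"
  by (auto simp: perm_fun_skew_sum perm_fun_direct_sum perm_fun_delta perm_fun_singleton
      perm_d_1d_def)

lemma perm_fun_d_d1:
  "p \<in> {1..i+j+1} \<Longrightarrow> perm_fun (delta i \<ominus>\<^sub>p (delta j \<oplus>\<^sub>p [1])) p = perm_d_d1 i j p"
  by (auto simp: perm_fun_skew_sum perm_fun_direct_sum perm_fun_delta perm_fun_singleton
      perm_d_d1_def)

lemma perm_fun_21_dd:
  "p \<in> {1..j+k+2} \<Longrightarrow> perm_fun ([2, 1] \<ominus>\<^sub>p (delta j \<oplus>\<^sub>p delta k)) p = perm_21_dd j k p"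
  by (auto simp: perm_fun_skew_sum perm_fun_direct_sum perm_fun_delta perm_fun_pair perm_21_dd_def)

lemma cyc_d_1d:
  shows "cyc (delta i \<ominus>\<^sub>p ([1] \<oplus>\<^sub>p delta k)) = orbit_count {1..i+k+1} (perm_d_1d i k)"
    and "bij_betw (perm_d_1d i k) {1..i+k+1} {1..i+k+1}"
  using cyc_eq_orbit_count_of[OF is_perm_list_skew_sum[OF is_perm_list_delta
      is_perm_list_direct_sum[OF is_perm_list_singleton is_perm_list_delta]] _ perm_fun_d_1d]
  by simp_all

lemma cyc_d_d1:
  shows "cyc (delta i \<ominus>\<^sub>p (delta j \<oplus>\<^sub>p [1])) = orbit_count {1..i+j+1} (perm_d_d1 i j)"
    and "bij_betw (perm_d_d1 i j) {1..i+j+1} {1..i+j+1}"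
  using cyc_eq_orbit_count_of[OF is_perm_list_skew_sum[OF is_perm_list_delta
      is_perm_list_direct_sum[OF is_perm_list_delta is_perm_list_singleton]] _ perm_fun_d_d1]
  by simp_all

lemma cyc_21_dd:
  shows "cyc ([2, 1] \<ominus>\<^sub>p (delta j \<oplus>\<^sub>p delta k)) = orbit_count {1..j+k+2} (perm_21_dd j k)"
    and "bij_betw (perm_21_dd j k) {1..j+k+2} {1..j+k+2}"
  using cyc_eq_orbit_count_of[OF is_perm_list_skew_sum[OF is_perm_list_21
      is_perm_list_direct_sum[OF is_perm_list_delta is_perm_list_delta]] _ perm_fun_21_dd]
  by simp_all

lemma delete_first_last_d_1d:
  assumes p: "p \<in> {1..i+k+1}"
  shows "delete_point 1 (delete_point (i+k+3) (perm_d_1d (Suc i) (Suc k))) p = perm_d_1d i k p"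
proof -
  let ?n = "i+k+3" and ?f = "perm_d_1d (Suc i) (Suc k)"
  have g: "delete_point ?n ?f q = (if q = 1 then 2 else ?f q)" if "q \<in> {1..?n-1}" for q
    using that by (auto simp: delete_point_below skip_def squeeze_def perm_d_1d_def)
  have "delete_point 1 (delete_point ?n ?f) p = squeeze 1 (skip 1 (delete_point ?n ?f) (Suc p))"
    using p by (simp add: delete_point_above)
  also have "\<dots> = perm_d_1d i k p" using p by (auto simp: skip_def g squeeze_def perm_d_1d_def)
  finally show ?thesis .
qed

lemma delete_first_last_d_d1:
  assumes p: "p \<in> {1..i+j+1}"
  shows "delete_point 1 (delete_point (i+j+3) (perm_d_d1 (Suc i) (Suc j))) p = perm_d_d1 i j p"
proof -
  let ?n = "i+j+3" and ?f = "perm_d_d1 (Suc i) (Suc j)"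
  have g: "delete_point ?n ?f q = (if q = 1 then j + 2 else ?f q)" if "q \<in> {1..?n-1}" for q
    using that by (auto simp: delete_point_below skip_def squeeze_def perm_d_d1_def)
  have "delete_point 1 (delete_point ?n ?f) p = squeeze 1 (skip 1 (delete_point ?n ?f) (Suc p))"
    using p by (simp add: delete_point_above)
  also have "\<dots> = perm_d_d1 i j p" using p by (auto simp: skip_def g squeeze_def perm_d_d1_def)
  finally show ?thesis .
qed

lemma orbit_count_d_1d:
  "orbit_count {1..i+k+1} (perm_d_1d i k)
     = (if i \<le> k then 1 + (k - i + 1) div 2 else 1 + (i - k) div 2)"
proof (induction i arbitrary: k)
  case 0
  have "delete_point 1 (perm_d_1d 0 k) p = reversal k p" if "p \<in> {1..k+1-1}" for p
    using that by (auto simp: perm_d_1d_def reversal_def delete_point_above skip_def squeeze_def)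
  then have "orbit_count {1..k+1} (perm_d_1d 0 k) = orbit_count {1..k} (reversal k) + 1"
    using orbit_count_delete_point(1)[OF cyc_d_1d(2)[of 0 k], of 1 "reversal k"]
    by (simp add: perm_d_1d_def)
  then show ?case using orbit_count_reversal[of k] by simp
next
  case (Suc i)
  show ?case
  proof (cases k)
    case 0
    have "orbit_count {1..Suc i+1} (perm_d_1d (Suc i) 0)
        = orbit_count {1..Suc i+1} (reversal (Suc i+1))"
      by (rule orbit_count_cong[OF bij_betw_reversal]) (auto simp: perm_d_1d_def reversal_def)
    then show ?thesis using 0 orbit_count_reversal[of "Suc i + 1"] by simp
  next
    case (Suc k')
    let ?n = "i + k' + 3" and ?f = "perm_d_1d (Suc i) (Suc k')"
    have e: "Suc i + Suc k' + 1 = ?n" by simp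
    have f: "bij_betw ?f {1..?n} {1..?n}" using cyc_d_1d(2)[of "Suc i" "Suc k'", unfolded e] .
    have "orbit_count {1..?n} ?f = orbit_count {1..?n-2} (perm_d_1d i k')
        + (if ?f ?n = ?n then 1 else 0) + (if delete_point ?n ?f 1 = 1 then 1 else 0)"
    proof (rule orbit_count_delete_two_points(1)[OF f])
      show "delete_point 1 (delete_point ?n ?f) p = perm_d_1d i k' p" if "p \<in> {1..?n - 2}" for p
        using delete_first_last_d_1d[of p i k'] that by simp
    qed auto
    also have "\<dots> = orbit_count {1..i+k'+1} (perm_d_1d i k')"
      by (simp add: perm_d_1d_def delete_point_below skip_def squeeze_def)
    finally show ?thesis using Suc.IH[of k'] Suc by (simp add: numeral_3_eq_3)
  qed
qed

lemma orbit_count_d_d1: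
  "orbit_count {1..i+j+1} (perm_d_d1 i j)
     = (if i \<le> j then 1 + (j - i + 1) div 2 else 1 + (i - j) div 2)"
proof (induction i arbitrary: j)
  case 0
  have "delete_point (j+1) (perm_d_d1 0 j) p = reversal j p" if "p \<in> {1..j+1-1}" for p
    using that by (auto simp: perm_d_d1_def reversal_def delete_point_below skip_def squeeze_def)
  then have "orbit_count {1..j+1} (perm_d_d1 0 j) = orbit_count {1..j} (reversal j) + 1"
    using orbit_count_delete_point(1)[OF cyc_d_d1(2)[of 0 j], of "j+1" "reversal j"]
    by (simp add: perm_d_d1_def)
  then show ?case using orbit_count_reversal[of j] by simp
next
  case (Suc i)
  show ?case
  proof (cases j)
    case 0
    have "orbit_count {1..Suc i+1} (perm_d_d1 (Suc i) 0)
        = orbit_count {1..Suc i+1} (reversal (Suc i+1))"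
      by (rule orbit_count_cong[OF bij_betw_reversal]) (auto simp: perm_d_d1_def reversal_def)
    then show ?thesis using 0 orbit_count_reversal[of "Suc i + 1"] by simp
  next
    case (Suc j')
    let ?n = "i + j' + 3" and ?f = "perm_d_d1 (Suc i) (Suc j')"
    have e: "Suc i + Suc j' + 1 = ?n" by simp
    have f: "bij_betw ?f {1..?n} {1..?n}" using cyc_d_d1(2)[of "Suc i" "Suc j'", unfolded e] .
    have "orbit_count {1..?n} ?f = orbit_count {1..?n-2} (perm_d_d1 i j')
        + (if ?f ?n = ?n then 1 else 0) + (if delete_point ?n ?f 1 = 1 then 1 else 0)"
    proof (rule orbit_count_delete_two_points(1)[OF f])
      show "delete_point 1 (delete_point ?n ?f) p = perm_d_d1 i j' p" if "p \<in> {1..?n - 2}" for p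
        using delete_first_last_d_d1[of p i j'] that by simp
    qed auto
    also have "\<dots> = orbit_count {1..i+j'+1} (perm_d_d1 i j')"
      by (simp add: perm_d_d1_def delete_point_below skip_def squeeze_def)
    finally show ?thesis using Suc.IH[of j'] Suc by (simp add: numeral_3_eq_3)
  qed
qed

lemma delete_two_cycle_21_dd_left:
  assumes j: "j \<ge> 4" and p: "p \<in> {1..j+k}"
  shows "delete_point 3 (delete_point j (perm_21_dd j k)) p = perm_21_dd (j - 2) k p"
proof -
  let ?f = "perm_21_dd j k"
  define G where "G q = (if q = 1 then j+k+1 else if q = 2 then j+k else if q = 3 then 3
     else if q < j then j+3-q else if q \<le> j+1 then j+2-q else 2*j+k+1-q)" for q
  have g: "delete_point j ?f q = G q" if q: "q \<in> {1..j+k+1}" for q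
  proof -
    consider "q < j" | "q \<ge> j" by linarith
    then show ?thesis
    proof cases
      case 1
      then have "delete_point j ?f q = squeeze j (skip j ?f q)" by (simp add: delete_point_below)
      then show ?thesis using 1 q j by (auto simp: skip_def squeeze_def perm_21_dd_def G_def)
    next
      case 2
      then have "delete_point j ?f q = squeeze j (skip j ?f (Suc q))"
        by (simp add: delete_point_above)
      then show ?thesis using 2 q j by (auto simp: skip_def squeeze_def perm_21_dd_def G_def)
    qed
  qed
  have G3: "G q = 3 \<longleftrightarrow> q = 3" if "q \<in> {1..j+k+1}" for q
    using that j by (auto simp: G_def)
  consider "p < 3" | "p \<ge> 3" by linarith
  then show ?thesis
  proof cases
    case 1
    then have "delete_point 3 (delete_point j ?f) p = squeeze 3 (G p)"
      using p G3 g by (simp add: delete_point_below skip_def)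
    then show ?thesis using 1 p j by (auto simp: squeeze_def G_def perm_21_dd_def)
  next
    case 2
    then have "delete_point 3 (delete_point j ?f) p = squeeze 3 (G (Suc p))"
      using p G3 g by (simp add: delete_point_above skip_def)
    then show ?thesis using 2 p j by (auto simp: squeeze_def G_def perm_21_dd_def)
  qed
qed

lemma delete_two_cycle_21_dd_right:
  assumes k: "k \<ge> 4" and p: "p \<in> {1..j+k}"
  shows "delete_point (j+3) (delete_point (j+k) (perm_21_dd j k)) p = perm_21_dd j (k - 2) p"
proof -
  let ?f = "perm_21_dd j k"
  define G where "G q = (if q = 1 then j+k+1 else if q = 2 then j+k else if q \<le> j+2 then j+3-q
     else if q = j+3 then j+3 else if q < j+k then 2*j+k+3-q else 2*j+k+2-q)" for q
  have g: "delete_point (j+k) ?f q = G q" if q: "q \<in> {1..j+k+1}" for q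
  proof -
    consider "q < j+k" | "q \<ge> j+k" by linarith
    then show ?thesis
    proof cases
      case 1
      then have "delete_point (j+k) ?f q = squeeze (j+k) (skip (j+k) ?f q)"
        by (simp add: delete_point_below)
      then show ?thesis using 1 q k by (auto simp: skip_def squeeze_def perm_21_dd_def G_def)
    next
      case 2
      then have "delete_point (j+k) ?f q = squeeze (j+k) (skip (j+k) ?f (Suc q))"
        by (simp add: delete_point_above)
      then show ?thesis using 2 q k by (auto simp: skip_def squeeze_def perm_21_dd_def G_def)
    qed
  qed
  have G3: "G q = j+3 \<longleftrightarrow> q = j+3" if "q \<in> {1..j+k+1}" for q
    using that k by (auto simp: G_def)
  consider "p < j+3" | "p \<ge> j+3" by linarith
  then show ?thesis
  proof cases
    case 1
    then have "delete_point (j+3) (delete_point (j+k) ?f) p = squeeze (j+3) (G p)"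
      using p G3 g by (simp add: delete_point_below skip_def)
    then show ?thesis using 1 p k by (auto simp: squeeze_def G_def perm_21_dd_def)
  next
    case 2
    then have "delete_point (j+3) (delete_point (j+k) ?f) p = squeeze (j+3) (G (Suc p))"
      using p G3 g by (simp add: delete_point_above skip_def)
    then show ?thesis using 2 p k by (auto simp: squeeze_def G_def perm_21_dd_def)
  qed
qed

lemma delete_fixed_point_21_dd_left:
  "p \<in> {1..k+4} \<Longrightarrow> delete_point 3 (perm_21_dd 3 k) p = perm_21_dd 2 k p"
  by (auto simp: delete_point_below delete_point_above skip_def squeeze_def perm_21_dd_def)

lemma delete_fixed_point_21_dd_right:
  "p \<in> {1..j+4} \<Longrightarrow> delete_point (j+3) (perm_21_dd j 3) p = perm_21_dd j 2 p"
  by (auto simp: delete_point_below delete_point_above skip_def squeeze_def perm_21_dd_def)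

text \<open>Counting the fixed points met while repeatedly deleting the largest point gives the
  number of cycles in a form that simp can evaluate on small concrete permutations.\<close>

fun deletion_fixpoints :: "nat \<Rightarrow> (nat \<Rightarrow> nat) \<Rightarrow> nat" where
  "deletion_fixpoints 0 f = 0"
| "deletion_fixpoints (Suc n) f =
     deletion_fixpoints n (delete_point (Suc n) f) + (if f (Suc n) = Suc n then 1 else 0)"

lemma orbit_count_eq_deletion_fixpoints:
  "bij_betw f {1..n} {1..n} \<Longrightarrow> orbit_count {1..n} f = deletion_fixpoints n f"
proof (induction n arbitrary: f)
  case 0
  then show ?case by (simp add: orbit_count_def)
next
  case (Suc n)
  have x: "Suc n \<in> {1..Suc n}" by simp
  note del = orbit_count_delete_point[OF Suc.prems x refl]
  have "bij_betw (delete_point (Suc n) f) {1..n} {1..n}" using del(2) by simp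
  then show ?case using del(1) Suc.IH by simp
qed

lemma orbit_count_21_dd_base:
  assumes "j \<in> {1, 2}" "k \<in> {1, 2}"
  shows "orbit_count {1..j+k+2} (perm_21_dd j k) = 1"
proof -
  have "deletion_fixpoints (j+k+2) (perm_21_dd j k) = 1"
    using assms by (auto simp: eval_nat_numeral perm_21_dd_def delete_point_def skip_def
        squeeze_def unsqueeze_def)
  then show ?thesis using orbit_count_eq_deletion_fixpoints[OF cyc_21_dd(2)[of j k]] by simp
qed

lemma orbit_count_21_dd_left_small:
  assumes "j \<le> 2"
  shows "orbit_count {1..j+k+2} (perm_21_dd j k)
           = (j + 1) div 2 + (k + 1) div 2 + 1 - (if 1 \<le> j \<and> 1 \<le> k then 2 else 0)"
  using assms
proof (induction k rule: less_induct)
  case (less k)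
  show ?case
  proof (cases "j = 0 \<or> k = 0")
    case True
    have "orbit_count {1..j+k+2} (perm_21_dd j k) = orbit_count {1..j+k+2} (reversal (j+k+2))"
      by (rule orbit_count_cong[OF bij_betw_reversal])
         (use True in \<open>auto simp: perm_21_dd_def reversal_def\<close>)
    then show ?thesis using True orbit_count_reversal[of "j+k+2"] by auto
  next
    case False
    then have j: "j \<in> {1, 2}" using less.prems by auto
    consider "k \<in> {1, 2}" | "k = 3" | "k \<ge> 4" using False by force
    then show ?thesis
    proof cases
      case 1
      then show ?thesis using orbit_count_21_dd_base[OF j 1] j by auto
    next
      case 2
      have "orbit_count {1..j+k+2} (perm_21_dd j k) = orbit_count {1..j+k+2-1} (perm_21_dd j 2) + 1"
        using orbit_count_delete_point(1)[OF cyc_21_dd(2)[of j k], of "j+3" "perm_21_dd j 2"]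
          delete_fixed_point_21_dd_right[of _ j] 2 by (simp add: perm_21_dd_def)
      also have "j+k+2-1 = j+2+2" using 2 by simp
      finally show ?thesis using less.IH[of 2] 2 less.prems j by auto
    next
      case 3
      have "orbit_count {1..j+k+2} (perm_21_dd j k) = orbit_count {1..j+k+2-2} (perm_21_dd j (k-2))
          + (if perm_21_dd j k (j+k) = j+k then 1 else 0)
          + (if delete_point (j+k) (perm_21_dd j k) (j+3) = j+3 then 1 else 0)"
      proof (rule orbit_count_delete_two_points(1)[OF cyc_21_dd(2)])
        show "delete_point (j+3) (delete_point (j+k) (perm_21_dd j k)) p = perm_21_dd j (k-2) p"
          if "p \<in> {1..j+k+2-2}" for p
          using delete_two_cycle_21_dd_right[OF 3, of p j] that by simp
      qed (use 3 in auto)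
      also have "\<dots> = orbit_count {1..j+k+2-2} (perm_21_dd j (k-2)) + 1"
        using 3 by (simp add: perm_21_dd_def delete_point_below skip_def squeeze_def)
      also have "j+k+2-2 = j+(k-2)+2" using 3 by simp
      finally show ?thesis using less.IH[of "k-2"] 3 less.prems j by auto
    qed
  qed
qed

lemma orbit_count_21_dd:
  "orbit_count {1..j+k+2} (perm_21_dd j k)
     = (j + 1) div 2 + (k + 1) div 2 + 1 - (if 1 \<le> j \<and> 1 \<le> k then 2 else 0)"
proof (induction j rule: less_induct)
  case (less j)
  consider "j \<le> 2" | "j = 3" | "j \<ge> 4" by force
  then show ?case
  proof cases
    case 1
    then show ?thesis by (rule orbit_count_21_dd_left_small)
  next
    case 2
    have "orbit_count {1..j+k+2} (perm_21_dd j k) = orbit_count {1..j+k+2-1} (perm_21_dd 2 k) + 1"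
      using orbit_count_delete_point(1)[OF cyc_21_dd(2)[of j k], of 3 "perm_21_dd 2 k"]
        delete_fixed_point_21_dd_left[of _ k] 2 by (simp add: perm_21_dd_def)
    also have "j+k+2-1 = 2+k+2" using 2 by simp
    finally show ?thesis using less.IH[of 2] 2 by auto
  next
    case 3
    have "orbit_count {1..j+k+2} (perm_21_dd j k) = orbit_count {1..j+k+2-2} (perm_21_dd (j-2) k)
        + (if perm_21_dd j k j = j then 1 else 0)
        + (if delete_point j (perm_21_dd j k) 3 = 3 then 1 else 0)"
    proof (rule orbit_count_delete_two_points(1)[OF cyc_21_dd(2)])
      show "delete_point 3 (delete_point j (perm_21_dd j k)) p = perm_21_dd (j-2) k p"
        if "p \<in> {1..j+k+2-2}" for p
        using delete_two_cycle_21_dd_left[OF 3, of p k] that by simp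
    qed (use 3 in auto)
    also have "\<dots> = orbit_count {1..j+k+2-2} (perm_21_dd (j-2) k) + 1"
      using 3 by (simp add: perm_21_dd_def delete_point_below skip_def squeeze_def)
    also have "j+k+2-2 = (j-2)+k+2" using 3 by simp
    moreover have "Suc j div 2 = Suc (Suc (j - 2) div 2)" using 3 by presburger
    ultimately show ?thesis using less.IH[of "j-2"] 3 by auto
  qed
qed

section \<open>Shallowness of the three families\<close>

lemma double_half_ceiling: "2 * int ((m + 1) div 2) = int m + int m mod 2"
  by presburger

lemma double_half_floor: "2 * int (m div 2) = int m - int m mod 2"
  by presburger

lemma shallow_of_skew_delta_statistics:
  assumes len: "length xs = i + k + 1"
    and inv: "Inv xs = inv_count (delta i) + inv_count (delta k) + i * (k + 1)"
    and D: "Dsum xs = disp (int k + 1) (delta i) + int i + disp (- int i) (delta k)"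
    and cyc: "cyc xs = (if i \<le> k then 1 + (k - i + 1) div 2 else 1 + (i - k) div 2)"
  shows "shallow xs"
proof -
  have I2: "2 * int (Inv xs) = int i * int i + int k * int k + 2 * (int i * int k) + int i - int k"
    using inv inv_count_delta[of i] inv_count_delta[of k] by (simp add: algebra_simps)
  have "2 * int (cyc xs) + 2 * Dsum xs
      = int i * int i + int k * int k + 2 * (int i * int k) + 3 * int i + int k + 2"
  proof (cases "i \<le> k")
    case True
    then obtain d where k: "k = i + d" using le_Suc_ex by blast
    have "2 * int (cyc xs) = 2 + int d + int d mod 2"
      using cyc k double_half_ceiling[of d] by simp
    moreover have "2 * disp (int k + 1) (delta i) = 2 * (int i * int k) + 2 * int i"
      using disp_delta_large_shift[of i "int k + 1"] True by (simp add: algebra_simps)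
    moreover have "2 * disp (- int i) (delta k) = int i * int i + int k * int k - int d mod 2"
      using disp_delta_small_shift[of "- int i" k] k by (simp add: power2_eq_square algebra_simps)
    moreover have "int k = int i + int d" using k by simp
    ultimately show ?thesis using D by linarith
  next
    case False
    define d where "d = i - k"
    have i: "i = k + d" "1 \<le> d" using False by (simp_all add: d_def)
    have "2 * int (cyc xs) = 2 + int d - int d mod 2"
      using cyc i False double_half_floor[of d] by simp
    moreover have "(int i + (int k + 1)) mod 2 = 1 - int d mod 2" using i by presburger
    then have "2 * disp (int k + 1) (delta i)
        = int i * int i + int k * int k + 2 * int k + int d mod 2"
      using disp_delta_small_shift[of "int k + 1" i] i by (simp add: power2_eq_square algebra_simps)
    moreover have "2 * disp (- int i) (delta k) = 2 * (int i * int k)"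
      using disp_delta_large_shift[of k "- int i"] i by (simp add: algebra_simps)
    moreover have "int i = int k + int d" using i by simp
    ultimately show ?thesis using D by linarith
  qed
  then show ?thesis unfolding shallow_def Tcyc_def using I2 len by linarith
qed

lemma shallow_d_1d: "shallow (delta i \<ominus>\<^sub>p ([1] \<oplus>\<^sub>p delta k))"
proof (rule shallow_of_skew_delta_statistics)
  show "Inv (delta i \<ominus>\<^sub>p ([1] \<oplus>\<^sub>p delta k))
      = inv_count (delta i) + inv_count (delta k) + i * (k + 1)"
    unfolding Inv_eq_inv_count inv_count_skew_sum[OF is_perm_list_delta
        is_perm_list_direct_sum[OF is_perm_list_singleton is_perm_list_delta]]
      inv_count_direct_sum[OF is_perm_list_singleton is_perm_list_delta]
    by simp
  show "Dsum (delta i \<ominus>\<^sub>p ([1] \<oplus>\<^sub>p delta k))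
      = disp (int k + 1) (delta i) + int i + disp (- int i) (delta k)"
    by (simp add: Dsum_eq_disp disp_skew_sum disp_direct_sum algebra_simps)
  show "cyc (delta i \<ominus>\<^sub>p ([1] \<oplus>\<^sub>p delta k))
      = (if i \<le> k then 1 + (k - i + 1) div 2 else 1 + (i - k) div 2)"
    using cyc_d_1d(1) orbit_count_d_1d by simp
qed simp

lemma shallow_d_d1: "shallow (delta i \<ominus>\<^sub>p (delta k \<oplus>\<^sub>p [1]))"
proof (rule shallow_of_skew_delta_statistics)
  show "Inv (delta i \<ominus>\<^sub>p (delta k \<oplus>\<^sub>p [1]))
      = inv_count (delta i) + inv_count (delta k) + i * (k + 1)"
    unfolding Inv_eq_inv_count inv_count_skew_sum[OF is_perm_list_delta
        is_perm_list_direct_sum[OF is_perm_list_delta is_perm_list_singleton]]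
      inv_count_direct_sum[OF is_perm_list_delta is_perm_list_singleton]
    by simp
  show "Dsum (delta i \<ominus>\<^sub>p (delta k \<oplus>\<^sub>p [1]))
      = disp (int k + 1) (delta i) + int i + disp (- int i) (delta k)"
    by (simp add: Dsum_eq_disp disp_skew_sum disp_direct_sum algebra_simps)
  show "cyc (delta i \<ominus>\<^sub>p (delta k \<oplus>\<^sub>p [1]))
      = (if i \<le> k then 1 + (k - i + 1) div 2 else 1 + (i - k) div 2)"
    using cyc_d_d1(1) orbit_count_d_d1 by simp
qed simp

lemma disp_minus_two_delta:
  assumes "1 \<le> m"
  shows "2 * disp (-2) (delta m) = int m * int m + 4 - int m mod 2"
proof -
  have "(int m + -2) mod 2 = int m mod 2" by presburger
  then show ?thesis using disp_delta_small_shift[of "-2" m] assms by (simp add: power2_eq_square)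
qed

lemma shallow_21_dd: "shallow ([2, 1] \<ominus>\<^sub>p (delta j \<oplus>\<^sub>p delta k))"
proof -
  let ?xs = "[2, 1] \<ominus>\<^sub>p (delta j \<oplus>\<^sub>p delta k)"
  have "Inv ?xs = 1 + inv_count (delta j) + inv_count (delta k) + 2 * (j + k)"
    unfolding Inv_eq_inv_count inv_count_skew_sum[OF is_perm_list_21
        is_perm_list_direct_sum[OF is_perm_list_delta is_perm_list_delta]]
      inv_count_direct_sum[OF is_perm_list_delta is_perm_list_delta]
    by simp
  then have I2: "2 * int (Inv ?xs) = int j * int j + int k * int k + 3 * int j + 3 * int k + 2"
    using inv_count_delta[of j] inv_count_delta[of k] by (simp add: algebra_simps)
  have D2: "2 * Dsum ?xs = 2 * \<bar>int j + int k + 1\<bar> + 2 * \<bar>int j + int k - 1\<bar>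
      + 2 * disp (-2) (delta j) + 2 * disp (-2) (delta k)"
    by (simp add: Dsum_eq_disp disp_skew_sum disp_direct_sum algebra_simps)
  have C: "cyc ?xs = (j + 1) div 2 + (k + 1) div 2 + 1 - (if 1 \<le> j \<and> 1 \<le> k then 2 else 0)"
    using cyc_21_dd(1) orbit_count_21_dd by simp
  have hj: "2 * int ((j + 1) div 2) = int j + int j mod 2" by (rule double_half_ceiling)
  have hk: "2 * int ((k + 1) div 2) = int k + int k mod 2" by (rule double_half_ceiling)
  consider "1 \<le> j" "1 \<le> k" | "j = 0" "1 \<le> k" | "1 \<le> j" "k = 0" | "j = 0" "k = 0" by linarith
  then have "2 * int (cyc ?xs) + 2 * Dsum ?xs
      = int j * int j + int k * int k + 5 * int j + 5 * int k + 6"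
  proof cases
    case 1
    have "(j + 1) div 2 \<ge> 1" using 1 by simp
    then have "2 * int (cyc ?xs) = int j + int j mod 2 + int k + int k mod 2 - 2"
      using C 1 hj hk by simp
    then show ?thesis using D2 1 disp_minus_two_delta[of j] disp_minus_two_delta[of k] by simp
  next
    case 2
    then have "2 * int (cyc ?xs) = int k + int k mod 2 + 2" using C hk by simp
    then show ?thesis using D2 2 disp_minus_two_delta[of k] by (simp add: delta_0)
  next
    case 3
    then have "2 * int (cyc ?xs) = int j + int j mod 2 + 2" using C hj by simp
    then show ?thesis using D2 3 disp_minus_two_delta[of j] by (simp add: delta_0)
  next
    case 4
    then show ?thesis using C D2 by (simp add: delta_0)
  qed
  then show ?thesis unfolding shallow_def Tcyc_def using I2 by simp
qed

theorem lemma4p2: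
  fixes i j k :: nat
  shows "shallow ([2, 1] \<ominus>\<^sub>p (delta j \<oplus>\<^sub>p delta k)) \<and>
         shallow (delta i \<ominus>\<^sub>p ([1] \<oplus>\<^sub>p delta k)) \<and>
         shallow (delta i \<ominus>\<^sub>p (delta j \<oplus>\<^sub>p [1]))"
  using shallow_21_dd shallow_d_1d shallow_d_d1 by blast

end
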